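(* Let $\mathcal H$ be a separable Hilbert space, $\rho$ a distribution on $(X,Y)\in\mathcal H\times\mathbb R$ with covariance $H=\mathbb E[XX^\top]$ of largest eigenvalue $\lambda_{\max}$, and assume there is $\theta_*\in\mathcal H$ with $\langle\theta_*,X\rangle=Y$ a.s. Assume there is $R\ge0$ with $\mathbb E[\|X\|^2XX^\top]\preccurlyeq RH$. Run SGD $\theta_0=0$, $\theta_{t+1}=\theta_t-\gamma(\langle\theta_t,x_t\rangle-y_t)x_t$ with i.i.d. samples from $\rho$ and constant $\gamma\le(4\lambda_{\max})^{-1}$. Let $f_t=\mathbb E\,\mathcal R(\theta_t)$ with $\mathcal R(\theta)=\tfrac12\mathbb E_\rho(\langle\theta,X\rangle-Y)^2$, and $M_0=\theta_*\theta_*^\top$. Then for all $t\ge1$, $$f_t\le\frac{\operatorname{tr}(M_0)}{4\gamma t}+\gamma R\sum_{k=0}^{t-1}\frac{f_k}{t-k}.$$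
   Context: $\preccurlyeq$ is the Loewner order; $\operatorname{tr}(M_0)=\|\theta_*\|^2$. *)

theory Defs
  imports "HOL-Probability.Probability"
begin

definition cov_op :: "('a::{real_inner,second_countable_topology,complete_space} \<times> real) measure \<Rightarrow> 'a \<Rightarrow> 'a" where
  "cov_op \<rho> v = (\<integral>z. (inner (fst z) v) *\<^sub>R fst z \<partial>\<rho>)"

definition fourth_op :: "('a::{real_inner,second_countable_topology,complete_space} \<times> real) measure \<Rightarrow> 'a \<Rightarrow> 'a" where
  "fourth_op \<rho> v = (\<integral>z. ((norm (fst z))\<^sup>2 * inner (fst z) v) *\<^sub>R fst z \<partial>\<rho>)"

definition loewner_le :: "('a::real_inner \<Rightarrow> 'a) \<Rightarrow> ('a \<Rightarrow> 'a) \<Rightarrow> bool" where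
  "loewner_le A B \<longleftrightarrow> (\<forall>v. inner v (A v) \<le> inner v (B v))"

definition is_eigenvalue :: "('a::real_vector \<Rightarrow> 'a) \<Rightarrow> real \<Rightarrow> bool" where
  "is_eigenvalue A l \<longleftrightarrow> (\<exists>v. v \<noteq> 0 \<and> A v = l *\<^sub>R v)"

definition largest_eigenvalue :: "('a::real_vector \<Rightarrow> 'a) \<Rightarrow> real \<Rightarrow> bool" where
  "largest_eigenvalue A l \<longleftrightarrow> is_eigenvalue A l \<and> (\<forall>m. is_eigenvalue A m \<longrightarrow> m \<le> l)"

definition risk :: "('a::{real_inner,second_countable_topology,complete_space} \<times> real) measure \<Rightarrow> 'a \<Rightarrow> real" where
  "risk \<rho> \<theta> = (1/2) * (\<integral>z. (inner \<theta> (fst z) - snd z)\<^sup>2 \<partial>\<rho>)"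

primrec sgd :: "real \<Rightarrow> (nat \<Rightarrow> 'a::real_inner \<times> real) \<Rightarrow> nat \<Rightarrow> 'a" where
  "sgd \<gamma> zs 0 = 0"
| "sgd \<gamma> zs (Suc t) =
     sgd \<gamma> zs t - (\<gamma> * (inner (sgd \<gamma> zs t) (fst (zs t)) - snd (zs t))) *\<^sub>R fst (zs t)"

end

theory Submission
  imports Defs
begin

(* Let eta_t = theta_t - theta_* and A = I - gamma H; by realizability eta_(t+1) = (I - gamma x_t x_t^T) eta_t.
   Measure an error v by gd_risk j v = <A^j v, H A^j v>, twice the risk left after j further steps of
   full gradient descent started at error v. As 0 <= gamma H <= I, a telescoping sum gives
   gd_risk j v <= |v|^2 / (gamma (2j + 1)). For a fresh sample x, E[x x^T] = H and E[|x|^2 x x^T] <= R H give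
     E gd_risk j ((I - gamma x x^T) v) <= gd_risk (j + 1) v + gamma R / (2j + 1) * gd_risk 0 v,
   and since eta_t is independent of x_t this is a recursion for E gd_risk j eta_t. Unrolled, it reads
     E gd_risk 0 eta_t <= gd_risk t theta_* + sum_(k<t) gamma R / (2(t - 1 - k) + 1) * E gd_risk 0 eta_k,
   which gives the claim for f_t = E gd_risk 0 eta_t / 2, because 2(t - 1 - k) + 1 >= t - k.
   The step size enters only through gamma H <= I. That the largest eigenvalue bounds the Rayleigh quotient
   of H relies on H being compact: E |x|^2 < infinity makes it a norm limit of finite-rank operators. *)

section \<open>The covariance operator\<close>

lemma quadratic_nonneg_imp_discrim_le:
  fixes a b c :: real
  assumes nonneg: "\<And>t. 0 \<le> a + 2 * b * t + c * t\<^sup>2" and "0 \<le> c"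
  shows "b\<^sup>2 \<le> a * c"
proof (cases "c = 0")
  case True
  show ?thesis
  proof (rule ccontr)
    assume "\<not> ?thesis"
    then have "b \<noteq> 0" using True by simp
    have "0 \<le> a + 2 * b * (- (a + 1) / (2 * b))" using nonneg[of "- (a + 1) / (2 * b)"] True by simp
    also have "\<dots> = -1" using \<open>b \<noteq> 0\<close> by (simp add: field_simps)
    finally show False by simp
  qed
next
  case False
  with \<open>0 \<le> c\<close> have c: "c > 0" by simp
  have "0 \<le> a + 2 * b * (- b / c) + c * (- b / c)\<^sup>2" by (rule nonneg)
  also have "\<dots> = a - b\<^sup>2 / c" using c by (simp add: field_simps power2_eq_square)
  finally show ?thesis using c by (simp add: field_simps)
qed

(* The library's integrableI_bounded is stated for sort banach, which the sort
   {real_normed_vector, complete_space} does not entail. *)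
lemma integrableI_bounded_complete:
  fixes f :: "'a \<Rightarrow> 'b::{real_normed_vector, complete_space, second_countable_topology}"
  assumes f[measurable]: "f \<in> borel_measurable M" and fin: "(\<integral>\<^sup>+x. norm (f x) \<partial>M) < \<infinity>"
  shows "integrable M f"
proof -
  obtain s where s: "\<And>i. simple_function M (s i)"
    and pointwise: "\<And>x. x \<in> space M \<Longrightarrow> (\<lambda>i. s i x) \<longlonglongrightarrow> f x"
    and bound: "\<And>i x. x \<in> space M \<Longrightarrow> norm (s i x) \<le> 2 * norm (f x)"
    using borel_measurable_implies_sequence_metric[OF f, of 0] by simp metis
  have fin2: "(\<integral>\<^sup>+x. ennreal (2 * norm (f x)) \<partial>M) < \<infinity>"
    using fin by (simp add: ennreal_mult nn_integral_cmult ennreal_mult_less_top)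
  have simple: "Bochner_Integration.simple_bochner_integrable M (s i)" for i
  proof (rule simple_bochner_integrableI_bounded[OF s])
    have "(\<integral>\<^sup>+x. norm (s i x) \<partial>M) \<le> (\<integral>\<^sup>+x. ennreal (2 * norm (f x)) \<partial>M)"
      by (intro nn_integral_mono) (simp add: bound)
    then show "(\<integral>\<^sup>+x. norm (s i x) \<partial>M) < \<infinity>" using fin2 by (rule le_less_trans)
  qed
  let ?S = "\<lambda>i. \<integral>\<^sup>+x. ennreal (norm (f x - s i x)) \<partial>M"
  have lim: "?S \<longlonglongrightarrow> 0"
    using s pointwise bound fin2
    by (intro nn_integral_dominated_convergence_norm[where w = "\<lambda>x. 2 * norm (f x)"])
       (auto intro: borel_measurable_simple_function)
  let ?s = "\<lambda>i. Bochner_Integration.simple_bochner_integral M (s i)"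
  have "Cauchy ?s"
  proof (rule metric_CauchyI)
    fix e :: real assume "0 < e"
    then obtain N where N: "\<And>n. N \<le> n \<Longrightarrow> ?S n < e / 2"
      using order_tendstoD(2)[OF lim, of "ennreal (e / 2)"] by (auto simp: eventually_sequentially)
    have "dist (?s m) (?s n) < e" if "N \<le> m" "N \<le> n" for m n
    proof -
      have "norm (?s n - ?s m) \<le> ?S n + ?S m"
        by (intro simple_bochner_integral_bounded simple f)
      also have "\<dots> < ennreal (e / 2) + e / 2" by (intro add_strict_mono N that)
      also have "\<dots> = e" using \<open>0 < e\<close> by (simp flip: ennreal_plus)
      finally show ?thesis using \<open>0 < e\<close> by (simp add: dist_norm ennreal_less_iff norm_minus_commute)
    qed
    then show "\<exists>N. \<forall>m\<ge>N. \<forall>n\<ge>N. dist (?s m) (?s n) < e" by blast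
  qed
  then obtain I where "?s \<longlonglongrightarrow> I" by (auto simp: convergent_eq_Cauchy[symmetric] convergent_def)
  then show ?thesis by (intro integrable.intros has_bochner_integral.intros[OF f simple lim])
qed

lemma norm_inner_scaleR_le:
  fixes x v :: "'a::real_inner"
  shows "norm (inner x v *\<^sub>R x) \<le> norm v * (norm x)\<^sup>2"
  using mult_right_mono[OF Cauchy_Schwarz_ineq2[of x v] norm_ge_zero[of x]]
  by (simp add: power2_eq_square mult_ac)

locale finite_second_moment =
  fixes \<rho> :: "('a::{real_inner,second_countable_topology,complete_space} \<times> real) measure"
  assumes prob_space_\<rho>: "prob_space \<rho>"
    and sets_\<rho>: "sets \<rho> = sets borel"
    and integrable_norm_sq: "integrable \<rho> (\<lambda>w. (norm (fst w))\<^sup>2)"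
begin

abbreviation H :: "'a \<Rightarrow> 'a" where "H \<equiv> cov_op \<rho>"

definition hnorm_sq :: "'a \<Rightarrow> real" where "hnorm_sq v = inner v (H v)"

definition trace_H :: real where "trace_H = (\<integral>w. (norm (fst w))\<^sup>2 \<partial>\<rho>)"

lemma space_\<rho>: "space \<rho> = UNIV"
  using sets_eq_imp_space_eq[OF sets_\<rho>] by simp

lemma fst_measurable[measurable]: "fst \<in> borel_measurable \<rho>"
  and snd_measurable[measurable]: "snd \<in> borel_measurable \<rho>"
  by (simp_all add: measurable_cong_sets[OF sets_\<rho> refl] borel_measurable_continuous_onI
      continuous_on_fst continuous_on_snd)

lemma integrable_inner_mult_inner: "integrable \<rho> (\<lambda>w. inner (fst w) u * inner (fst w) v)"
proof (rule Bochner_Integration.integrable_bound[OF integrable_mult_right[OF integrable_norm_sq, of "norm u * norm v"]])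
  show "AE w in \<rho>. norm (inner (fst w) u * inner (fst w) v) \<le> norm (norm u * norm v * (norm (fst w))\<^sup>2)"
  proof (intro AE_I2)
    fix w :: "'a \<times> real"
    have "\<bar>inner (fst w) u\<bar> * \<bar>inner (fst w) v\<bar> \<le> (norm (fst w) * norm u) * (norm (fst w) * norm v)"
      by (intro mult_mono Cauchy_Schwarz_ineq2) auto
    then show "norm (inner (fst w) u * inner (fst w) v) \<le> norm (norm u * norm v * (norm (fst w))\<^sup>2)"
      by (simp add: abs_mult power2_eq_square mult_ac)
  qed
qed measurable

lemma nn_integral_norm_cov_integrand_le:
  "(\<integral>\<^sup>+w. norm (inner (fst w) v *\<^sub>R fst w) \<partial>\<rho>) \<le> ennreal (norm v * trace_H)"
proof -
  have "(\<integral>\<^sup>+w. norm (inner (fst w) v *\<^sub>R fst w) \<partial>\<rho>) \<le> (\<integral>\<^sup>+w. ennreal (norm v * (norm (fst w))\<^sup>2) \<partial>\<rho>)"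
    by (intro nn_integral_mono ennreal_leI norm_inner_scaleR_le)
  also have "\<dots> = ennreal (norm v * trace_H)"
    unfolding trace_H_def using integrable_norm_sq by (subst nn_integral_eq_integral) auto
  finally show ?thesis .
qed

lemma integrable_cov_integrand: "integrable \<rho> (\<lambda>w. inner (fst w) v *\<^sub>R fst w)"
  using nn_integral_norm_cov_integrand_le[of v]
  by (intro integrableI_bounded_complete) (auto simp: le_less_trans)

lemma inner_cov_op: "inner u (H v) = (\<integral>w. inner (fst w) u * inner (fst w) v \<partial>\<rho>)"
  unfolding cov_op_def using integrable_cov_integrand[of v]
  by (subst integral_inner_right[symmetric]) (auto simp: inner_commute mult.commute)

lemma inner_cov_op_commute: "inner u (H v) = inner v (H u)"
  by (simp add: inner_cov_op mult.commute)

lemma cov_op_symmetric: "inner (H u) v = inner u (H v)"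
  by (simp add: inner_commute[of "H u"] inner_cov_op_commute)

lemma bounded_linear_cov_op: "bounded_linear H"
proof (rule bounded_linear_intro)
  show "H (u + v) = H u + H v" for u v
    unfolding cov_op_def using integrable_cov_integrand[of u] integrable_cov_integrand[of v]
    by (simp add: inner_add_right scaleR_add_left)
  show "H (c *\<^sub>R v) = c *\<^sub>R H v" for c v
    unfolding cov_op_def by (simp flip: scaleR_scaleR)
  show "norm (H v) \<le> norm v * trace_H" for v
  proof -
    have "ennreal (norm (H v)) \<le> (\<integral>\<^sup>+w. norm (inner (fst w) v *\<^sub>R fst w) \<partial>\<rho>)"
      unfolding cov_op_def
      by (rule has_bochner_integral_norm_bound[OF has_bochner_integral_integrable[OF integrable_cov_integrand]])
    also have "\<dots> \<le> ennreal (norm v * trace_H)" by (rule nn_integral_norm_cov_integrand_le)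
    finally show ?thesis by (simp add: trace_H_def)
  qed
qed

sublocale H: bounded_linear H by (rule bounded_linear_cov_op)

lemma hnorm_sq_eq_integral: "hnorm_sq v = (\<integral>w. (inner (fst w) v)\<^sup>2 \<partial>\<rho>)"
  unfolding hnorm_sq_def inner_cov_op by (simp add: power2_eq_square)

lemma hnorm_sq_nonneg: "0 \<le> hnorm_sq v"
  unfolding hnorm_sq_eq_integral by simp

lemma hnorm_sq_le_trace: "hnorm_sq v \<le> trace_H * (norm v)\<^sup>2"
proof -
  have "(inner x v)\<^sup>2 \<le> (norm v)\<^sup>2 * (norm x)\<^sup>2" for x :: 'a
    using Cauchy_Schwarz_ineq[of x v] by (simp add: power2_norm_eq_inner mult.commute)
  then have "hnorm_sq v \<le> (\<integral>w. (norm v)\<^sup>2 * (norm (fst w))\<^sup>2 \<partial>\<rho>)"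
    unfolding hnorm_sq_eq_integral using integrable_inner_mult_inner[of v v] integrable_norm_sq
    by (intro integral_mono) (auto simp: power2_eq_square)
  then show ?thesis by (simp add: trace_H_def mult.commute)
qed

lemma hnorm_sq_scaleR: "hnorm_sq (c *\<^sub>R v) = c\<^sup>2 * hnorm_sq v"
  unfolding hnorm_sq_def by (simp add: H.scaleR power2_eq_square)

lemma hnorm_sq_add_scaleR:
  "hnorm_sq (u + c *\<^sub>R v) = hnorm_sq u + 2 * c * inner u (H v) + c\<^sup>2 * hnorm_sq v"
  unfolding hnorm_sq_def H.add H.scaleR
  by (simp add: inner_cov_op_commute[of v u] power2_eq_square algebra_simps)

lemma inner_cov_op_sq_le: "(inner u (H v))\<^sup>2 \<le> hnorm_sq u * hnorm_sq v"
proof (rule quadratic_nonneg_imp_discrim_le[OF _ hnorm_sq_nonneg])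
  show "0 \<le> hnorm_sq u + 2 * inner u (H v) * t + hnorm_sq v * t\<^sup>2" for t
    using hnorm_sq_nonneg[of "u + t *\<^sub>R v"] by (simp add: hnorm_sq_add_scaleR mult_ac)
qed

lemma norm_cov_op_sq_le:
  assumes bound: "\<And>v. hnorm_sq v \<le> l * (norm v)\<^sup>2" and "0 \<le> l"
  shows "(norm (H u))\<^sup>2 \<le> l * hnorm_sq u"
proof (cases "H u = 0")
  case False
  have "((norm (H u))\<^sup>2)\<^sup>2 \<le> hnorm_sq u * hnorm_sq (H u)"
    using inner_cov_op_sq_le[of u "H u"] by (simp add: cov_op_symmetric power2_norm_eq_inner)
  also have "\<dots> \<le> hnorm_sq u * (l * (norm (H u))\<^sup>2)" by (intro mult_left_mono bound hnorm_sq_nonneg)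
  finally show ?thesis using False by (simp add: power2_eq_square mult_ac)
qed (use \<open>0 \<le> l\<close> hnorm_sq_nonneg in simp)

lemma continuous_hnorm_sq: "continuous_on UNIV hnorm_sq"
  unfolding hnorm_sq_def[abs_def]
  by (intro continuous_on_inner continuous_on_id linear_continuous_on bounded_linear_cov_op)

lemma borel_measurable_hnorm_sq[measurable]: "hnorm_sq \<in> borel_measurable borel"
  by (rule borel_measurable_continuous_onI[OF continuous_hnorm_sq])

lemma risk_eq_hnorm_sq:
  assumes "AE w in \<rho>. inner \<theta>s (fst w) = snd w"
  shows "risk \<rho> \<theta> = hnorm_sq (\<theta> - \<theta>s) / 2"
proof -
  have "(\<integral>w. (inner \<theta> (fst w) - snd w)\<^sup>2 \<partial>\<rho>) = (\<integral>w. (inner (fst w) (\<theta> - \<theta>s))\<^sup>2 \<partial>\<rho>)"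
  proof (rule integral_cong_AE)
    show "AE w in \<rho>. (inner \<theta> (fst w) - snd w)\<^sup>2 = (inner (fst w) (\<theta> - \<theta>s))\<^sup>2"
      using assms by eventually_elim (simp add: inner_diff_right inner_commute)
  qed measurable
  then show ?thesis unfolding risk_def hnorm_sq_eq_integral by simp
qed

end

section \<open>Compactness of the covariance operator and its largest eigenvalue\<close>

lemma norm_diff_mult_norm_add_le:
  fixes x y :: "'b::real_normed_vector"
  assumes "norm y \<le> 2 * norm x"
  shows "norm (x - y) * (norm x + norm y) \<le> 9 * (norm x)\<^sup>2"
proof -
  have "norm (x - y) * (norm x + norm y) \<le> (3 * norm x) * (3 * norm x)"
    using norm_triangle_ineq4[of x y] assms by (intro mult_mono) auto
  then show ?thesis by (simp add: power2_eq_square)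
qed

lemma bounded_combinations_in_compact:
  fixes A :: "'a::real_normed_vector set" and b :: "'a \<Rightarrow> real"
  assumes "finite A"
  obtains K where "compact K" "\<And>c. (\<And>y. y \<in> A \<Longrightarrow> \<bar>c y\<bar> \<le> b y) \<Longrightarrow> (\<Sum>y\<in>A. c y *\<^sub>R y) \<in> K"
proof -
  from assms have "\<exists>K. compact K \<and> (\<forall>c. (\<forall>y\<in>A. \<bar>c y\<bar> \<le> b y) \<longrightarrow> (\<Sum>y\<in>A. c y *\<^sub>R y) \<in> K)"
  proof (induction A rule: finite_induct)
    case empty
    then show ?case by (intro exI[of _ "{0}"]) auto
  next
    case (insert a F)
    then obtain K where K: "compact K" "\<forall>c. (\<forall>y\<in>F. \<bar>c y\<bar> \<le> b y) \<longrightarrow> (\<Sum>y\<in>F. c y *\<^sub>R y) \<in> K"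
      by blast
    let ?L = "(\<lambda>t. t *\<^sub>R a) ` {- b a..b a}"
    have "compact ?L" by (intro compact_continuous_image continuous_intros compact_Icc)
    then have "compact {x + y | x y. x \<in> ?L \<and> y \<in> K}" using K(1) by (rule compact_sums)
    moreover have "(\<Sum>y\<in>insert a F. c y *\<^sub>R y) \<in> {x + y | x y. x \<in> ?L \<and> y \<in> K}"
      if "\<forall>y\<in>insert a F. \<bar>c y\<bar> \<le> b y" for c
    proof -
      have "c a *\<^sub>R a \<in> ?L" using that by (auto simp: abs_le_iff)
      moreover have "(\<Sum>y\<in>F. c y *\<^sub>R y) \<in> K" using K(2) that by auto
      ultimately show ?thesis using insert.hyps by auto
    qed
    ultimately show ?case by blast
  qed
  then show ?thesis using that by blast
qed

lemma abs_inner_le_norm: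
  fixes x v :: "'a::real_inner"
  assumes "norm v \<le> 1"
  shows "\<bar>inner x v\<bar> \<le> norm x"
  using Cauchy_Schwarz_ineq2[of x v] assms by (meson mult_left_le norm_ge_zero order_trans)

lemma norm_inner_scaleR_diff_le:
  fixes x y v :: "'a::real_inner"
  assumes "norm v \<le> 1"
  shows "norm (inner x v *\<^sub>R x - inner y v *\<^sub>R y) \<le> norm (x - y) * (norm x + norm y)"
proof -
  have "inner x v *\<^sub>R x - inner y v *\<^sub>R y = inner (x - y) v *\<^sub>R x + inner y v *\<^sub>R (x - y)"
    by (simp add: algebra_simps)
  then have "norm (inner x v *\<^sub>R x - inner y v *\<^sub>R y)
      \<le> norm (inner (x - y) v *\<^sub>R x) + norm (inner y v *\<^sub>R (x - y))"
    by (metis norm_triangle_ineq)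
  also have "\<dots> \<le> norm (x - y) * norm x + norm y * norm (x - y)"
    using assms by (auto intro!: add_mono mult_right_mono abs_inner_le_norm)
  finally show ?thesis by (simp add: algebra_simps)
qed

context finite_second_moment
begin

lemma simple_approximation_fst:
  obtains s where "\<And>i. simple_function \<rho> (s i)" "\<And>i w. norm (s i w) \<le> 2 * norm (fst w)"
    "(\<lambda>i. \<integral>w. norm (fst w - s i w) * (norm (fst w) + norm (s i w)) \<partial>\<rho>) \<longlonglongrightarrow> 0"
proof -
  obtain s where s: "\<forall>i. simple_function \<rho> (s i)" and lim: "\<forall>w\<in>space \<rho>. (\<lambda>i. s i w) \<longlonglongrightarrow> fst w"
    and bound: "\<forall>i. \<forall>w\<in>space \<rho>. dist (s i w) 0 \<le> 2 * dist (fst w) 0"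
    using borel_measurable_implies_sequence_metric[OF fst_measurable, of 0] by blast
  then have s: "\<And>i. simple_function \<rho> (s i)" and lim: "\<And>w. (\<lambda>i. s i w) \<longlonglongrightarrow> fst w"
    and bound: "\<And>i w. norm (s i w) \<le> 2 * norm (fst w)"
    by (simp_all add: space_\<rho> del: split_paired_All)
  have [measurable]: "s i \<in> borel_measurable \<rho>" for i
    using s by (rule borel_measurable_simple_function)
  have "(\<lambda>i. \<integral>w. norm (fst w - s i w) * (norm (fst w) + norm (s i w)) \<partial>\<rho>) \<longlonglongrightarrow> (\<integral>w. 0 \<partial>\<rho>)"
  proof (rule integral_dominated_convergence[where w = "\<lambda>w. 9 * (norm (fst w))\<^sup>2"])
    show "AE w in \<rho>. (\<lambda>i. norm (fst w - s i w) * (norm (fst w) + norm (s i w))) \<longlonglongrightarrow> 0"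
      using lim by (intro AE_I2) (auto intro!: tendsto_eq_intros simp del: norm_minus_cancel)
    show "AE w in \<rho>. norm (norm (fst w - s i w) * (norm (fst w) + norm (s i w))) \<le> 9 * (norm (fst w))\<^sup>2" for i
      using norm_diff_mult_norm_add_le[OF bound] by simp
  qed (use integrable_norm_sq in auto)
  then show ?thesis using that[OF s bound] by simp
qed

lemma simple_bochner_integrable_cov_integrand:
  assumes "simple_function \<rho> s"
  shows "Bochner_Integration.simple_bochner_integrable \<rho> (\<lambda>w. inner (s w) v *\<^sub>R s w)"
proof -
  interpret prob_space \<rho> by (rule prob_space_\<rho>)
  show ?thesis
    using simple_function_compose1[OF assms, of "\<lambda>x. inner x v *\<^sub>R x"] emeasure_finite
    by (intro Bochner_Integration.simple_bochner_integrable.intros) (auto simp: top_unique)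
qed

lemma norm_cov_op_sub_simple_le:
  assumes s: "simple_function \<rho> s" and bound: "\<And>w. norm (s w) \<le> 2 * norm (fst w)"
    and v: "norm v \<le> 1"
  shows "norm (H v - (\<integral>w. inner (s w) v *\<^sub>R s w \<partial>\<rho>))
    \<le> (\<integral>w. norm (fst w - s w) * (norm (fst w) + norm (s w)) \<partial>\<rho>)"
proof -
  interpret prob_space \<rho> by (rule prob_space_\<rho>)
  have [measurable]: "s \<in> borel_measurable \<rho>" using s by (rule borel_measurable_simple_function)
  have "integrable \<rho> (\<lambda>w. inner (s w) v *\<^sub>R s w)"
    by (rule integrable.intros[OF has_bochner_integral_simple_bochner_integrable,
          OF simple_bochner_integrable_cov_integrand[OF s]])
  then have "has_bochner_integral \<rho> (\<lambda>w. inner (fst w) v *\<^sub>R fst w - inner (s w) v *\<^sub>R s w)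
      (H v - (\<integral>w. inner (s w) v *\<^sub>R s w \<partial>\<rho>))"
    unfolding cov_op_def
    by (intro has_bochner_integral_diff has_bochner_integral_integrable integrable_cov_integrand)
  then have "ennreal (norm (H v - (\<integral>w. inner (s w) v *\<^sub>R s w \<partial>\<rho>)))
      \<le> (\<integral>\<^sup>+w. norm (inner (fst w) v *\<^sub>R fst w - inner (s w) v *\<^sub>R s w) \<partial>\<rho>)"
    by (rule has_bochner_integral_norm_bound)
  also have "\<dots> \<le> (\<integral>\<^sup>+w. ennreal (norm (fst w - s w) * (norm (fst w) + norm (s w))) \<partial>\<rho>)"
    using v by (intro nn_integral_mono ennreal_leI norm_inner_scaleR_diff_le)
  also have "\<dots> = ennreal (\<integral>w. norm (fst w - s w) * (norm (fst w) + norm (s w)) \<partial>\<rho>)"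
  proof (rule nn_integral_eq_integral)
    show "integrable \<rho> (\<lambda>w. norm (fst w - s w) * (norm (fst w) + norm (s w)))"
      using norm_diff_mult_norm_add_le[OF bound]
      by (intro Bochner_Integration.integrable_bound[OF integrable_mult_right[OF integrable_norm_sq, of 9]])
        auto
  qed simp
  finally show ?thesis by (simp add: integral_nonneg_AE)
qed

lemma simple_cov_image_in_compact:
  assumes s: "simple_function \<rho> s"
  obtains K where "compact K" "\<And>v. norm v \<le> 1 \<Longrightarrow> (\<integral>w. inner (s w) v *\<^sub>R s w \<partial>\<rho>) \<in> K"
proof -
  interpret prob_space \<rho> by (rule prob_space_\<rho>)
  let ?A = "s ` space \<rho>"
  let ?p = "\<lambda>a. measure \<rho> {w \<in> space \<rho>. s w = a}"
  obtain K where "compact K"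
    and K: "\<And>c. (\<And>y. y \<in> ?A \<Longrightarrow> \<bar>c y\<bar> \<le> norm y) \<Longrightarrow> (\<Sum>y\<in>?A. c y *\<^sub>R y) \<in> K"
    using bounded_combinations_in_compact[OF simple_functionD(1)[OF s], of norm] by blast
  moreover have "(\<integral>w. inner (s w) v *\<^sub>R s w \<partial>\<rho>) \<in> K" if v: "norm v \<le> 1" for v
  proof -
    note sbi = simple_bochner_integrable_cov_integrand[OF s, of v]
    have "(\<integral>w. inner (s w) v *\<^sub>R s w \<partial>\<rho>) = (\<Sum>y\<in>?A. (?p y * inner y v) *\<^sub>R y)"
      using simple_bochner_integral_partition[OF sbi s, of "\<lambda>x. inner x v *\<^sub>R x"]
        has_bochner_integral_simple_bochner_integrable[OF sbi]
      by (simp add: has_bochner_integral_integral_eq)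
    moreover have "\<bar>?p y * inner y v\<bar> \<le> norm y" for y
    proof -
      have "\<bar>inner y v\<bar> \<le> norm y" using v by (rule abs_inner_le_norm)
      then have "?p y * \<bar>inner y v\<bar> \<le> 1 * norm y" by (intro mult_mono prob_le_1) auto
      then show ?thesis by (simp add: abs_mult)
    qed
    ultimately show ?thesis using K by simp
  qed
  ultimately show ?thesis using that by blast
qed

lemma compact_closure_cov_op_ball: "compact (closure (H ` cball 0 1))"
  unfolding compact_eq_totally_bounded
proof (intro conjI allI impI)
  show "Topological_Spaces.complete (closure (H ` cball 0 1))" by (simp add: complete_eq_closed)
  fix e :: real assume "e > 0"
  obtain s where s: "\<And>i. simple_function \<rho> (s i)" and bound: "\<And>i w. norm (s i w) \<le> 2 * norm (fst w)"
    and lim: "(\<lambda>i. \<integral>w. norm (fst w - s i w) * (norm (fst w) + norm (s i w)) \<partial>\<rho>) \<longlonglongrightarrow> 0"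
    by (rule simple_approximation_fst) blast
  obtain i where i: "(\<integral>w. norm (fst w - s i w) * (norm (fst w) + norm (s i w)) \<partial>\<rho>) < e / 3"
    using order_tendstoD(2)[OF lim, of "e / 3"] \<open>e > 0\<close> by (auto simp: eventually_sequentially)
  obtain K where "compact K" and K: "\<And>v. norm v \<le> 1 \<Longrightarrow> (\<integral>w. inner (s i w) v *\<^sub>R s i w \<partial>\<rho>) \<in> K"
    by (rule simple_cov_image_in_compact[OF s[of i]]) blast
  then obtain k where "finite k" and k: "K \<subseteq> (\<Union>x\<in>k. ball x (e / 3))"
    using \<open>e > 0\<close> unfolding compact_eq_totally_bounded by (meson divide_pos_pos zero_less_numeral)
  have "H ` cball 0 1 \<subseteq> (\<Union>x\<in>k. cball x (2 * e / 3))"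
  proof
    fix y assume "y \<in> H ` cball 0 1"
    then obtain v where v: "norm v \<le> 1" and y: "y = H v" by auto
    obtain x where "x \<in> k" and x: "dist x (\<integral>w. inner (s i w) v *\<^sub>R s i w \<partial>\<rho>) < e / 3"
      using K[OF v] k by auto
    moreover have "dist (\<integral>w. inner (s i w) v *\<^sub>R s i w \<partial>\<rho>) (H v) < e / 3"
      using norm_cov_op_sub_simple_le[OF s[of i] bound[of i] v] i by (simp add: dist_norm norm_minus_commute)
    ultimately have "dist x y \<le> 2 * e / 3"
      using dist_triangle[of x "H v" "\<integral>w. inner (s i w) v *\<^sub>R s i w \<partial>\<rho>"] y by simp
    then show "y \<in> (\<Union>x\<in>k. cball x (2 * e / 3))" using \<open>x \<in> k\<close> by auto
  qed
  then have "closure (H ` cball 0 1) \<subseteq> (\<Union>x\<in>k. cball x (2 * e / 3))"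
    using \<open>finite k\<close> by (intro closure_minimal closed_UN) auto
  also have "\<dots> \<subseteq> (\<Union>x\<in>k. ball x e)"
    using \<open>e > 0\<close> by (intro UN_mono) (auto simp: subset_eq)
  finally show "\<exists>k. finite k \<and> closure (H ` cball 0 1) \<subseteq> (\<Union>x\<in>k. ball x e)"
    using \<open>finite k\<close> by blast
qed

lemma hnorm_sq_rayleigh_sup:
  obtains lam where "\<And>v. hnorm_sq v \<le> lam * (norm v)\<^sup>2"
    "\<And>e. 0 < e \<Longrightarrow> \<exists>v. norm v \<le> 1 \<and> lam - e < hnorm_sq v"
proof -
  define lam where "lam = (SUP v\<in>cball 0 1. hnorm_sq v)"
  have "bdd_above (hnorm_sq ` cball 0 1)"
  proof (rule bdd_aboveI2)
    fix v :: 'a assume "v \<in> cball 0 1"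
    then have "trace_H * (norm v)\<^sup>2 \<le> trace_H * 1"
      unfolding trace_H_def by (intro mult_left_mono) (auto simp: power_le_one)
    then show "hnorm_sq v \<le> trace_H" using hnorm_sq_le_trace[of v] by simp
  qed
  then have upper: "hnorm_sq v \<le> lam" if "norm v \<le> 1" for v
    unfolding lam_def using that by (intro cSUP_upper) auto
  have "hnorm_sq v \<le> lam * (norm v)\<^sup>2" for v
  proof (cases "v = 0")
    case False
    have "hnorm_sq (v /\<^sub>R norm v) \<le> lam" by (rule upper) (simp add: False)
    then show ?thesis using False by (simp add: hnorm_sq_scaleR field_simps)
  qed (simp add: hnorm_sq_def)
  moreover have "\<exists>v. norm v \<le> 1 \<and> lam - e < hnorm_sq v" if "0 < e" for e
    using less_cSUP_iff[OF _ \<open>bdd_above _\<close>, of "lam - e"] that unfolding lam_def by auto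
  ultimately show ?thesis using that by blast
qed

lemma norm_cov_op_sub_scaleR_sq_le:
  assumes bound: "\<And>v. hnorm_sq v \<le> lam * (norm v)\<^sup>2" and "0 \<le> lam" and "norm v \<le> 1"
  shows "(norm (H v - lam *\<^sub>R v))\<^sup>2 \<le> lam * (lam - hnorm_sq v)"
proof -
  have "(norm (H v - lam *\<^sub>R v))\<^sup>2 = (norm (H v))\<^sup>2 - 2 * lam * hnorm_sq v + lam\<^sup>2 * (norm v)\<^sup>2"
    unfolding power2_norm_eq_inner hnorm_sq_def
    by (simp add: inner_commute[of "H v" v] power2_eq_square algebra_simps)
  also have "\<dots> \<le> lam * hnorm_sq v - 2 * lam * hnorm_sq v + lam\<^sup>2 * 1"
    using norm_cov_op_sq_le[OF bound \<open>0 \<le> lam\<close>, of v] \<open>norm v \<le> 1\<close> \<open>0 \<le> lam\<close>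
    by (intro add_mono diff_mono mult_left_mono) (auto simp: power_le_one)
  also have "\<dots> = lam * (lam - hnorm_sq v)" by (simp add: power2_eq_square algebra_simps)
  finally show ?thesis .
qed

lemma approximate_eigenvectors_rayleigh_sup:
  assumes "0 < lam" and bound: "\<And>v. hnorm_sq v \<le> lam * (norm v)\<^sup>2"
    and approx: "\<And>e. 0 < e \<Longrightarrow> \<exists>v. norm v \<le> 1 \<and> lam - e < hnorm_sq v"
  obtains vs where "\<And>n. norm (vs n) \<le> 1" "(\<lambda>n. hnorm_sq (vs n)) \<longlonglongrightarrow> lam"
    "(\<lambda>n. H (vs n) - lam *\<^sub>R vs n) \<longlonglongrightarrow> 0"
proof -
  obtain vs where vs: "\<And>n. norm (vs n) \<le> 1"
    and vs_approx: "\<And>n. lam - inverse (real (Suc n)) < hnorm_sq (vs n)"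
    using approx[of "inverse (real (Suc _))"] by (metis inverse_positive_iff_positive of_nat_0_less_iff zero_less_Suc)
  have q_lim: "(\<lambda>n. hnorm_sq (vs n)) \<longlonglongrightarrow> lam"
  proof (rule tendsto_sandwich)
    show "\<forall>\<^sub>F n in sequentially. lam - inverse (real (Suc n)) \<le> hnorm_sq (vs n)"
      using vs_approx by (simp add: less_imp_le)
    show "\<forall>\<^sub>F n in sequentially. hnorm_sq (vs n) \<le> lam"
    proof (intro always_eventually allI)
      fix n
      have "lam * (norm (vs n))\<^sup>2 \<le> lam * 1"
        using vs[of n] \<open>0 < lam\<close> by (intro mult_left_mono) (auto simp: power_le_one)
      then show "hnorm_sq (vs n) \<le> lam" using bound[of "vs n"] by simp
    qed
    show "(\<lambda>n. lam - inverse (real (Suc n))) \<longlonglongrightarrow> lam"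
      using tendsto_diff[OF tendsto_const LIMSEQ_inverse_real_of_nat] by simp
  qed simp
  moreover have "(\<lambda>n. H (vs n) - lam *\<^sub>R vs n) \<longlonglongrightarrow> 0"
  proof (rule Lim_null_comparison)
    show "\<forall>\<^sub>F n in sequentially. norm (H (vs n) - lam *\<^sub>R vs n) \<le> sqrt (lam * (lam - hnorm_sq (vs n)))"
      using norm_cov_op_sub_scaleR_sq_le[OF bound less_imp_le[OF \<open>0 < lam\<close>] vs]
      by (intro always_eventually allI real_le_rsqrt)
    show "(\<lambda>n. sqrt (lam * (lam - hnorm_sq (vs n)))) \<longlonglongrightarrow> 0"
      using tendsto_real_sqrt[OF tendsto_mult[OF tendsto_const[of lam] tendsto_diff[OF tendsto_const[of lam] q_lim]]]
      by simp
  qed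
  ultimately show ?thesis using that vs by blast
qed

lemma is_eigenvalue_rayleigh_sup:
  assumes "0 < lam" and "\<And>v. hnorm_sq v \<le> lam * (norm v)\<^sup>2"
    and "\<And>e. 0 < e \<Longrightarrow> \<exists>v. norm v \<le> 1 \<and> lam - e < hnorm_sq v"
  shows "is_eigenvalue H lam"
proof -
  obtain vs where vs: "\<And>n. norm (vs n) \<le> 1" and q_lim: "(\<lambda>n. hnorm_sq (vs n)) \<longlonglongrightarrow> lam"
    and err_lim: "(\<lambda>n. H (vs n) - lam *\<^sub>R vs n) \<longlonglongrightarrow> 0"
    using approximate_eigenvectors_rayleigh_sup[OF assms] by blast
  have "\<forall>n. H (vs n) \<in> closure (H ` cball 0 1)"
    using vs closure_subset by fastforce
  then obtain w r where r: "strict_mono r" and "((\<lambda>n. H (vs n)) \<circ> r) \<longlonglongrightarrow> w"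
    using seq_compactE[OF compact_imp_seq_compact[OF compact_closure_cov_op_ball]] by metis
  then have w: "(\<lambda>n. H (vs (r n))) \<longlonglongrightarrow> w" by (simp add: o_def)
  define u where "u = w /\<^sub>R lam"
  have "(\<lambda>n. (H (vs (r n)) - (H (vs (r n)) - lam *\<^sub>R vs (r n))) /\<^sub>R lam) \<longlonglongrightarrow> (w - 0) /\<^sub>R lam"
    using w LIMSEQ_subseq_LIMSEQ[OF err_lim r] unfolding o_def by (intro tendsto_intros)
  then have u: "(\<lambda>n. vs (r n)) \<longlonglongrightarrow> u" using \<open>0 < lam\<close> by (simp add: u_def)
  have "H u = w" using LIMSEQ_unique[OF H.tendsto[OF u] w] .
  then have eigen: "H u = lam *\<^sub>R u" using \<open>0 < lam\<close> by (simp add: u_def)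
  have "(\<lambda>n. hnorm_sq (vs (r n))) \<longlonglongrightarrow> hnorm_sq u"
    unfolding hnorm_sq_def by (intro tendsto_inner u H.tendsto)
  then have "hnorm_sq u = lam"
    using LIMSEQ_unique LIMSEQ_subseq_LIMSEQ[OF q_lim r] by (auto simp: o_def)
  then have "u \<noteq> 0" using \<open>0 < lam\<close> by (auto simp: hnorm_sq_def)
  then show ?thesis using eigen unfolding is_eigenvalue_def by blast
qed

lemma hnorm_sq_le_largest_eigenvalue:
  assumes "largest_eigenvalue H l"
  shows "hnorm_sq v \<le> l * (norm v)\<^sup>2"
proof -
  obtain lam where bound: "\<And>v. hnorm_sq v \<le> lam * (norm v)\<^sup>2"
    and approx: "\<And>e. 0 < e \<Longrightarrow> \<exists>v. norm v \<le> 1 \<and> lam - e < hnorm_sq v"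
    by (rule hnorm_sq_rayleigh_sup) blast
  obtain v0 where "v0 \<noteq> 0" and "H v0 = l *\<^sub>R v0"
    using assms unfolding largest_eigenvalue_def is_eigenvalue_def by blast
  then have "0 \<le> l * (norm v0)\<^sup>2"
    using hnorm_sq_nonneg[of v0] by (simp add: hnorm_sq_def power2_norm_eq_inner)
  with \<open>v0 \<noteq> 0\<close> have "0 \<le> l" by (simp add: zero_le_mult_iff)
  have "lam \<le> l"
  proof (rule ccontr)
    assume "\<not> lam \<le> l"
    with \<open>0 \<le> l\<close> have "is_eigenvalue H lam" by (intro is_eigenvalue_rayleigh_sup bound approx) simp
    with assms \<open>\<not> lam \<le> l\<close> show False unfolding largest_eigenvalue_def by blast
  qed
  then show ?thesis using bound[of v] by (meson mult_right_mono order_trans zero_le_power2)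
qed

end

section \<open>Risk along gradient descent\<close>

locale gd_contraction = finite_second_moment +
  fixes \<gamma> :: real
  assumes step_pos: "0 < \<gamma>"
    and step_small: "\<And>v. \<gamma> * hnorm_sq v \<le> (norm v)\<^sup>2"
begin

definition gd_step :: "'a \<Rightarrow> 'a" where "gd_step v = v - \<gamma> *\<^sub>R H v"

definition gd_risk :: "nat \<Rightarrow> 'a \<Rightarrow> real" where "gd_risk j v = hnorm_sq ((gd_step ^^ j) v)"

lemma bounded_linear_gd_pow: "bounded_linear (gd_step ^^ j)"
proof (induction j)
  case (Suc j)
  have "bounded_linear gd_step"
    unfolding gd_step_def[abs_def]
    by (intro bounded_linear_sub bounded_linear_ident bounded_linear_compose[OF bounded_linear_scaleR_right]
        bounded_linear_cov_op)
  then show ?case using bounded_linear_compose[OF _ Suc.IH] by simp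
qed (simp add: id_def)

lemma cov_op_gd_pow: "H ((gd_step ^^ j) v) = (gd_step ^^ j) (H v)"
  by (induction j) (simp_all add: gd_step_def H.diff H.scaleR)

lemma gd_pow_symmetric: "inner ((gd_step ^^ j) u) w = inner u ((gd_step ^^ j) w)"
proof (induction j arbitrary: w)
  case (Suc j)
  have "inner (gd_step ((gd_step ^^ j) u)) w = inner ((gd_step ^^ j) u) (gd_step w)"
    by (simp add: gd_step_def inner_diff_left inner_diff_right cov_op_symmetric)
  also have "\<dots> = inner u ((gd_step ^^ j) (gd_step w))" by (rule Suc.IH)
  finally show ?case by (simp add: funpow_swap1)
qed simp

lemma gd_pow_double: "(gd_step ^^ (2 * j)) v = (gd_step ^^ j) ((gd_step ^^ j) v)"
  unfolding mult_2 funpow_add by simp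

lemma inner_gd_pow_nonneg: "0 \<le> inner w ((gd_step ^^ i) w)"
proof -
  define m where "m = i div 2"
  have "i = 2 * m \<or> i = Suc (2 * m)" unfolding m_def by presburger
  then show ?thesis
  proof
    assume "i = 2 * m"
    then have "inner w ((gd_step ^^ i) w) = inner ((gd_step ^^ m) w) ((gd_step ^^ m) w)"
      by (simp only: gd_pow_double gd_pow_symmetric)
    then show ?thesis by simp
  next
    assume "i = Suc (2 * m)"
    then have "inner w ((gd_step ^^ i) w) = inner ((gd_step ^^ m) w) (gd_step ((gd_step ^^ m) w))"
      by (simp only: funpow.simps o_apply gd_pow_double funpow_swap1 gd_pow_symmetric)
    also have "\<dots> \<ge> 0"
      using step_small[of "(gd_step ^^ m) w"]
      by (simp add: gd_step_def inner_diff_right hnorm_sq_def power2_norm_eq_inner)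
    finally show ?thesis .
  qed
qed

lemma gd_risk_eq: "gd_risk j v = inner v (H ((gd_step ^^ (2 * j)) v))"
  unfolding gd_risk_def hnorm_sq_def cov_op_gd_pow gd_pow_double gd_pow_symmetric ..

lemma gd_risk_0: "gd_risk 0 v = hnorm_sq v"
  by (simp add: gd_risk_def)

lemma inner_cov_gd_pow_Suc_le: "inner v (H ((gd_step ^^ Suc i) v)) \<le> inner v (H ((gd_step ^^ i) v))"
proof -
  interpret D: bounded_linear "gd_step ^^ i" by (rule bounded_linear_gd_pow)
  have "(gd_step ^^ Suc i) v = (gd_step ^^ i) v - \<gamma> *\<^sub>R (gd_step ^^ i) (H v)"
    by (simp only: funpow_Suc_right o_apply gd_step_def D.diff D.scaleR)
  then have "inner v (H ((gd_step ^^ Suc i) v))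
      = inner v (H ((gd_step ^^ i) v)) - \<gamma> * inner (H v) ((gd_step ^^ i) (H v))"
    by (simp add: H.diff H.scaleR inner_diff_right cov_op_symmetric)
  then show ?thesis
    using mult_nonneg_nonneg[OF less_imp_le[OF step_pos] inner_gd_pow_nonneg[of "H v" i]] by linarith
qed

lemma sum_inner_cov_gd_pow:
  "\<gamma> * (\<Sum>i<n. inner v (H ((gd_step ^^ i) v))) = inner v v - inner v ((gd_step ^^ n) v)"
  by (induction n) (simp_all add: gd_step_def inner_diff_right distrib_left)

lemma gd_risk_le: "gd_risk j v \<le> (norm v)\<^sup>2 / (\<gamma> * (2 * real j + 1))"
proof -
  have dec: "decseq (\<lambda>i. inner v (H ((gd_step ^^ i) v)))"
    by (intro decseq_SucI inner_cov_gd_pow_Suc_le)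
  have "(\<Sum>i<Suc (2 * j). gd_risk j v) \<le> (\<Sum>i<Suc (2 * j). inner v (H ((gd_step ^^ i) v)))"
    unfolding gd_risk_eq by (intro sum_mono decseqD[OF dec]) simp
  then have "\<gamma> * ((2 * real j + 1) * gd_risk j v) \<le> \<gamma> * (\<Sum>i<Suc (2 * j). inner v (H ((gd_step ^^ i) v)))"
    using step_pos by (intro mult_left_mono) (simp_all add: algebra_simps)
  also have "\<dots> = inner v v - inner v ((gd_step ^^ Suc (2 * j)) v)"
    by (rule sum_inner_cov_gd_pow)
  also have "\<dots> \<le> (norm v)\<^sup>2"
    using inner_gd_pow_nonneg[of v "Suc (2 * j)"] by (simp add: power2_norm_eq_inner)
  finally have "gd_risk j v * (\<gamma> * (2 * real j + 1)) \<le> (norm v)\<^sup>2" by (simp only: mult_ac)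
  then show ?thesis using step_pos by (simp add: pos_le_divide_eq)
qed

lemma gd_risk_add_scaleR:
  "gd_risk j (u + c *\<^sub>R x) = gd_risk j u + 2 * c * inner x (H ((gd_step ^^ (2 * j)) u)) + c\<^sup>2 * gd_risk j x"
proof -
  interpret D: bounded_linear "gd_step ^^ j" by (rule bounded_linear_gd_pow)
  have "inner ((gd_step ^^ j) u) (H ((gd_step ^^ j) x)) = inner ((gd_step ^^ j) ((gd_step ^^ j) u)) (H x)"
    by (simp add: cov_op_gd_pow gd_pow_symmetric)
  also have "\<dots> = inner x (H ((gd_step ^^ (2 * j)) u))"
    by (simp add: gd_pow_double inner_commute cov_op_symmetric)
  finally show ?thesis
    unfolding gd_risk_def D.add D.scaleR hnorm_sq_add_scaleR by simp
qed

lemma gd_risk_Suc: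
  "gd_risk (Suc j) v = gd_risk j v - 2 * \<gamma> * inner (H v) (H ((gd_step ^^ (2 * j)) v)) + \<gamma>\<^sup>2 * gd_risk j (H v)"
proof -
  have "gd_risk (Suc j) v = gd_risk j (v + (- \<gamma>) *\<^sub>R H v)"
    by (simp add: gd_risk_def gd_step_def funpow_Suc_right del: funpow.simps)
  then show ?thesis using gd_risk_add_scaleR[of j v "- \<gamma>" "H v"] by simp
qed

lemma gd_risk_rank_one_update:
  "gd_risk j (v - (\<gamma> * inner v x) *\<^sub>R x) = gd_risk j v
    - 2 * \<gamma> * (inner x v * inner x (H ((gd_step ^^ (2 * j)) v))) + \<gamma>\<^sup>2 * ((inner x v)\<^sup>2 * gd_risk j x)"
  using gd_risk_add_scaleR[of j v "- (\<gamma> * inner v x)" x]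
  by (simp add: inner_commute power2_eq_square algebra_simps)

lemma gd_risk_nonneg: "0 \<le> gd_risk j v"
  unfolding gd_risk_def by (rule hnorm_sq_nonneg)

lemma continuous_gd_risk: "continuous_on UNIV (gd_risk j)"
proof -
  have "continuous_on UNIV (hnorm_sq \<circ> (gd_step ^^ j))"
    using continuous_hnorm_sq linear_continuous_on[OF bounded_linear_gd_pow]
    by (intro continuous_on_compose) (auto intro: continuous_on_subset)
  then show ?thesis by (simp add: gd_risk_def[abs_def] o_def)
qed

lemma borel_measurable_gd_risk[measurable]: "gd_risk j \<in> borel_measurable borel"
  by (rule borel_measurable_continuous_onI[OF continuous_gd_risk])

end

section \<open>One step of stochastic gradient descent\<close>

locale gd_fourth_moment = gd_contraction +
  fixes R :: real
  assumes integrable_norm_pow4: "integrable \<rho> (\<lambda>w. (norm (fst w)) ^ 4)"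
    and fourth_op_le: "\<And>v. inner v (fourth_op \<rho> v) \<le> R * hnorm_sq v"
begin

lemma integrable_norm_sq_mult_inner_sq: "integrable \<rho> (\<lambda>w. (norm (fst w))\<^sup>2 * (inner (fst w) v)\<^sup>2)"
proof (rule Bochner_Integration.integrable_bound[OF integrable_mult_right[OF integrable_norm_pow4, of "(norm v)\<^sup>2"]])
  have bound: "(norm x)\<^sup>2 * (inner x v)\<^sup>2 \<le> (norm v)\<^sup>2 * (norm x) ^ 4" for x :: 'a
  proof -
    have "(norm x)\<^sup>2 * (inner x v)\<^sup>2 \<le> (norm x)\<^sup>2 * ((norm x)\<^sup>2 * (norm v)\<^sup>2)"
      using Cauchy_Schwarz_ineq[of x v] by (intro mult_left_mono) (simp_all add: power2_norm_eq_inner)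
    then show ?thesis by (simp add: power4_eq_xxxx power2_eq_square mult_ac)
  qed
  show "AE w in \<rho>. norm ((norm (fst w))\<^sup>2 * (inner (fst w) v)\<^sup>2) \<le> norm ((norm v)\<^sup>2 * (norm (fst w)) ^ 4)"
    using bound by (intro AE_I2) simp
qed measurable

lemma inner_fourth_op: "inner v (fourth_op \<rho> v) = (\<integral>w. (norm (fst w))\<^sup>2 * (inner (fst w) v)\<^sup>2 \<partial>\<rho>)"
proof -
  have "norm (((norm x)\<^sup>2 * inner x v) *\<^sub>R x) \<le> norm v * (norm x) ^ 4" for x :: 'a
    using mult_left_mono[OF norm_inner_scaleR_le[of x v], of "(norm x)\<^sup>2"]
    by (simp add: abs_mult power2_eq_square power4_eq_xxxx mult_ac)
  then have "(\<integral>\<^sup>+w. norm (((norm (fst w))\<^sup>2 * inner (fst w) v) *\<^sub>R fst w) \<partial>\<rho>)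
      \<le> (\<integral>\<^sup>+w. ennreal (norm v * (norm (fst w)) ^ 4) \<partial>\<rho>)"
    by (intro nn_integral_mono ennreal_leI)
  also have "\<dots> < \<infinity>"
    using integrable_norm_pow4 by (subst nn_integral_eq_integral) auto
  finally have "integrable \<rho> (\<lambda>w. ((norm (fst w))\<^sup>2 * inner (fst w) v) *\<^sub>R fst w)"
    by (intro integrableI_bounded_complete) auto
  then show ?thesis
    unfolding fourth_op_def
    by (subst integral_inner_right[symmetric]) (auto simp: power2_eq_square inner_commute mult_ac)
qed

lemma integral_inner_sq_gd_risk_le:
  "integrable \<rho> (\<lambda>w. (inner (fst w) v)\<^sup>2 * gd_risk j (fst w))"
  "(\<integral>w. (inner (fst w) v)\<^sup>2 * gd_risk j (fst w) \<partial>\<rho>) \<le> R * hnorm_sq v / (\<gamma> * (2 * real j + 1))"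
proof -
  define c where "c = 1 / (\<gamma> * (2 * real j + 1))"
  have "c > 0" using step_pos by (simp add: c_def)
  have le: "(inner x v)\<^sup>2 * gd_risk j x \<le> c * ((norm x)\<^sup>2 * (inner x v)\<^sup>2)" for x :: 'a
    using mult_left_mono[OF gd_risk_le[of j x], of "(inner x v)\<^sup>2"] by (simp add: c_def mult_ac)
  show int: "integrable \<rho> (\<lambda>w. (inner (fst w) v)\<^sup>2 * gd_risk j (fst w))"
    using le gd_risk_nonneg \<open>c > 0\<close>
    by (intro Bochner_Integration.integrable_bound[OF integrable_mult_right[OF integrable_norm_sq_mult_inner_sq, of c]])
      auto
  have "(\<integral>w. (inner (fst w) v)\<^sup>2 * gd_risk j (fst w) \<partial>\<rho>) \<le> (\<integral>w. c * ((norm (fst w))\<^sup>2 * (inner (fst w) v)\<^sup>2) \<partial>\<rho>)"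
    using int integrable_norm_sq_mult_inner_sq le by (intro integral_mono) auto
  also have "\<dots> = c * inner v (fourth_op \<rho> v)" by (simp add: inner_fourth_op)
  also have "\<dots> \<le> c * (R * hnorm_sq v)" using fourth_op_le \<open>c > 0\<close> by (intro mult_left_mono) auto
  finally show "(\<integral>w. (inner (fst w) v)\<^sup>2 * gd_risk j (fst w) \<partial>\<rho>) \<le> R * hnorm_sq v / (\<gamma> * (2 * real j + 1))"
    by (simp add: c_def)
qed

lemma integrable_gd_risk_sample_step:
  "integrable \<rho> (\<lambda>w. gd_risk j (v - (\<gamma> * inner v (fst w)) *\<^sub>R fst w))"
proof -
  interpret P: prob_space \<rho> by (rule prob_space_\<rho>)
  show ?thesis
    unfolding gd_risk_rank_one_update
    using integrable_inner_mult_inner[of v "H ((gd_step ^^ (2 * j)) v)"] integral_inner_sq_gd_risk_le(1)[of v j]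
    by simp
qed

lemma integral_gd_risk_sample_step_le:
  "(\<integral>w. gd_risk j (v - (\<gamma> * inner v (fst w)) *\<^sub>R fst w) \<partial>\<rho>)
    \<le> gd_risk (Suc j) v + \<gamma> * R / (2 * real j + 1) * hnorm_sq v"
proof -
  interpret P: prob_space \<rho> by (rule prob_space_\<rho>)
  define p where "p = H ((gd_step ^^ (2 * j)) v)"
  have "(\<integral>w. gd_risk j (v - (\<gamma> * inner v (fst w)) *\<^sub>R fst w) \<partial>\<rho>)
      = gd_risk j v - 2 * \<gamma> * inner (H v) p + \<gamma>\<^sup>2 * (\<integral>w. (inner (fst w) v)\<^sup>2 * gd_risk j (fst w) \<partial>\<rho>)"
    unfolding gd_risk_rank_one_update p_def[symmetric]
    using integrable_inner_mult_inner[of v p] integral_inner_sq_gd_risk_le(1)[of v j]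
    by (simp add: inner_cov_op cov_op_symmetric P.prob_space)
  also have "\<dots> \<le> gd_risk j v - 2 * \<gamma> * inner (H v) p + \<gamma>\<^sup>2 * (R * hnorm_sq v / (\<gamma> * (2 * real j + 1)))"
    by (intro add_left_mono mult_left_mono integral_inner_sq_gd_risk_le(2)) simp
  also have "\<dots> = gd_risk j v - 2 * \<gamma> * inner (H v) p + \<gamma> * R / (2 * real j + 1) * hnorm_sq v"
    using step_pos by (simp add: power2_eq_square)
  also have "\<dots> \<le> gd_risk (Suc j) v + \<gamma> * R / (2 * real j + 1) * hnorm_sq v"
    using mult_nonneg_nonneg[OF zero_le_power2[of \<gamma>] gd_risk_nonneg[of j "H v"]]
    by (simp add: gd_risk_Suc p_def)
  finally show ?thesis .
qed

lemma nn_integral_gd_risk_sample_step: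
  "(\<integral>\<^sup>+w. gd_risk j (v - (\<gamma> * inner v (fst w)) *\<^sub>R fst w) \<partial>\<rho>)
    \<le> gd_risk (Suc j) v + \<gamma> * R / (2 * real j + 1) * hnorm_sq v"
  using integral_gd_risk_sample_step_le[of j v]
  by (subst nn_integral_eq_integral[OF integrable_gd_risk_sample_step]) (auto simp: gd_risk_nonneg ennreal_leI)

end

section \<open>The SGD recursion\<close>

lemma (in prob_space) nn_integral_indep_var:
  assumes indep: "indep_var N X N' Y" and F: "(\<lambda>p. F (fst p) (snd p)) \<in> borel_measurable (N \<Otimes>\<^sub>M N')"
  shows "(\<integral>\<^sup>+\<omega>. F (X \<omega>) (Y \<omega>) \<partial>M) = (\<integral>\<^sup>+\<omega>. (\<integral>\<^sup>+y. F (X \<omega>) y \<partial>distr M N' Y) \<partial>M)"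
proof -
  let ?F = "\<lambda>p. F (fst p) (snd p)"
  have [measurable]: "X \<in> measurable M N" "Y \<in> measurable M N'" "?F \<in> borel_measurable (N \<Otimes>\<^sub>M N')"
    using indep_var_rv1[OF indep] indep_var_rv2[OF indep] F .
  interpret Y: prob_space "distr M N' Y" by (rule prob_space_distr) simp
  have F': "?F \<in> borel_measurable (distr M N X \<Otimes>\<^sub>M distr M N' Y)"
    using F by (simp add: measurable_cong_sets[OF sets_pair_measure_cong[OF sets_distr sets_distr] refl])
  have "(\<integral>\<^sup>+\<omega>. F (X \<omega>) (Y \<omega>) \<partial>M) = (\<integral>\<^sup>+p. ?F p \<partial>distr M (N \<Otimes>\<^sub>M N') (\<lambda>\<omega>. (X \<omega>, Y \<omega>)))"
    by (simp add: nn_integral_distr)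
  also have "\<dots> = (\<integral>\<^sup>+p. ?F p \<partial>(distr M N X \<Otimes>\<^sub>M distr M N' Y))"
    using indep by (simp add: indep_var_distribution_eq)
  also have "\<dots> = (\<integral>\<^sup>+x. \<integral>\<^sup>+y. F x y \<partial>distr M N' Y \<partial>distr M N X)"
    using Y.nn_integral_fst[symmetric, OF F'] by simp
  also have "\<dots> = (\<integral>\<^sup>+\<omega>. (\<integral>\<^sup>+y. F (X \<omega>) y \<partial>distr M N' Y) \<partial>M)"
    using Y.borel_measurable_nn_integral_fst[OF F'] by (subst nn_integral_distr) auto
  finally show ?thesis .
qed

lemma (in prob_space) nn_integral_indep_initial_segment:
  fixes t :: nat
  assumes indep: "indep_vars (\<lambda>_. N) z UNIV" and h: "h \<in> measurable (PiM {..<t} (\<lambda>_. N)) N'"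
    and F: "F \<in> borel_measurable (N' \<Otimes>\<^sub>M N)"
  shows "(\<integral>\<^sup>+\<omega>. F (h (restrict (\<lambda>i. z i \<omega>) {..<t}), z t \<omega>) \<partial>M)
    = (\<integral>\<^sup>+\<omega>. (\<integral>\<^sup>+y. F (h (restrict (\<lambda>i. z i \<omega>) {..<t}), y) \<partial>distr M N (z t)) \<partial>M)"
proof -
  let ?past = "\<lambda>\<omega>. restrict (\<lambda>i. z i \<omega>) {..<t}" and ?now = "\<lambda>\<omega>. restrict (\<lambda>i. z i \<omega>) {t}"
  have z: "z i \<in> measurable M N" for i using indep by (auto simp: indep_vars_def)
  have past: "?past \<in> measurable M (PiM {..<t} (\<lambda>_. N))" and now: "?now \<in> measurable M (PiM {t} (\<lambda>_. N))"
    by (rule measurable_restrict, rule z)+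
  have iv: "indep_var (PiM {..<t} (\<lambda>_. N)) ?past (PiM {t} (\<lambda>_. N)) ?now"
    by (rule indep_var_restrict[OF indep]) auto
  have at_t: "(\<lambda>g. g t) \<in> measurable (PiM {t} (\<lambda>_. N)) N"
    by (rule measurable_component_singleton) simp
  then have "(\<lambda>p. F (h (fst p), snd p t)) \<in> borel_measurable (PiM {..<t} (\<lambda>_. N) \<Otimes>\<^sub>M PiM {t} (\<lambda>_. N))"
    by (intro measurable_compose[OF _ F] measurable_Pair measurable_compose[OF measurable_fst h]
        measurable_compose[OF measurable_snd])
  note fubini = nn_integral_indep_var[OF iv, of "\<lambda>f g. F (h f, g t)", OF this]
  have "(\<integral>\<^sup>+\<omega>. F (h (?past \<omega>), z t \<omega>) \<partial>M) = (\<integral>\<^sup>+\<omega>. F (h (?past \<omega>), ?now \<omega> t) \<partial>M)"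
    by (intro nn_integral_cong) simp
  also have "\<dots> = (\<integral>\<^sup>+\<omega>. (\<integral>\<^sup>+g. F (h (?past \<omega>), g t) \<partial>distr M (PiM {t} (\<lambda>_. N)) ?now) \<partial>M)"
    by (rule fubini)
  also have "\<dots> = (\<integral>\<^sup>+\<omega>. (\<integral>\<^sup>+y. F (h (?past \<omega>), y) \<partial>distr M N (z t)) \<partial>M)"
  proof (intro nn_integral_cong)
    fix \<omega> assume "\<omega> \<in> space M"
    then have "h (?past \<omega>) \<in> space N'" by (intro measurable_space[OF h] measurable_space[OF past])
    then have Fa: "(\<lambda>y. F (h (?past \<omega>), y)) \<in> borel_measurable N"
      using measurable_comp[OF measurable_Pair1' F] by (simp add: o_def)
    have "(\<integral>\<^sup>+g. F (h (?past \<omega>), g t) \<partial>distr M (PiM {t} (\<lambda>_. N)) ?now)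
        = (\<integral>\<^sup>+\<omega>'. F (h (?past \<omega>), ?now \<omega>' t) \<partial>M)"
      using measurable_compose[OF at_t Fa] by (intro nn_integral_distr[OF now]) (simp only: measurable_distr_eq1)
    also have "\<dots> = (\<integral>\<^sup>+\<omega>'. F (h (?past \<omega>), z t \<omega>') \<partial>M)"
      by (intro nn_integral_cong) simp
    also have "\<dots> = (\<integral>\<^sup>+y. F (h (?past \<omega>), y) \<partial>distr M N (z t))"
      using Fa by (intro nn_integral_distr[symmetric, OF z]) (simp only: measurable_distr_eq1)
    finally show "(\<integral>\<^sup>+g. F (h (?past \<omega>), g t) \<partial>distr M (PiM {t} (\<lambda>_. N)) ?now)
        = (\<integral>\<^sup>+y. F (h (?past \<omega>), y) \<partial>distr M N (z t))" .
  qed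
  finally show ?thesis .
qed

lemma measurable_fst_borel[measurable]:
  "fst \<in> borel_measurable (borel :: ('a::topological_space \<times> 'b::topological_space) measure)"
  and measurable_snd_borel[measurable]:
  "snd \<in> borel_measurable (borel :: ('a::topological_space \<times> 'b::topological_space) measure)"
  by (simp_all add: borel_measurable_continuous_onI continuous_on_fst continuous_on_snd)

lemma sgd_cong: "(\<And>i. i < t \<Longrightarrow> zs i = zs' i) \<Longrightarrow> sgd \<gamma> zs t = sgd \<gamma> zs' t"
  by (induction t) auto

lemma measurable_sgd_PiM:
  fixes t :: nat
  assumes "{..<t} \<subseteq> I"
  shows "(\<lambda>zs. sgd \<gamma> zs t) \<in> borel_measurable (PiM I (\<lambda>_. borel :: ('a::{real_inner,second_countable_topology} \<times> real) measure))"
  using assms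
proof (induction t)
  case (Suc t)
  then have "{..<t} \<subseteq> I" and "t \<in> I" by auto
  note [measurable] = Suc.IH[OF \<open>{..<t} \<subseteq> I\<close>]
  have [measurable]: "(\<lambda>zs. zs t) \<in> measurable (PiM I (\<lambda>_. borel)) (borel :: ('a \<times> real) measure)"
    using \<open>t \<in> I\<close> by (rule measurable_component_singleton)
  show ?case by simp
qed simp

lemma measurable_sgd[measurable]:
  fixes z :: "nat \<Rightarrow> 'm \<Rightarrow> 'a::{real_inner,second_countable_topology} \<times> real"
  assumes [measurable]: "\<And>i. z i \<in> measurable M borel"
  shows "(\<lambda>\<omega>. sgd \<gamma> (\<lambda>i. z i \<omega>) t) \<in> borel_measurable M"
proof (induction t)
  case (Suc t)
  note [measurable] = Suc
  show ?case by simp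
qed simp

locale realizable_sgd = gd_fourth_moment +
  fixes M :: "'m measure" and z :: "nat \<Rightarrow> 'm \<Rightarrow> 'a \<times> real" and \<theta>s :: 'a
  assumes prob_space_M: "prob_space M"
    and indep_samples: "prob_space.indep_vars M (\<lambda>_. borel) z UNIV"
    and distr_samples: "\<And>i. distr M borel (z i) = \<rho>"
    and realizable: "AE w in \<rho>. inner \<theta>s (fst w) = snd w"
    and R_nonneg: "0 \<le> R"
begin

(* A nonnegative integral: that it is finite is only known once the recursion is unrolled. *)
definition expected_gd_risk :: "nat \<Rightarrow> nat \<Rightarrow> ennreal" where
  "expected_gd_risk t j = (\<integral>\<^sup>+\<omega>. gd_risk j (sgd \<gamma> (\<lambda>i. z i \<omega>) t - \<theta>s) \<partial>M)"

lemma measurable_samples[measurable]: "z i \<in> measurable M borel"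
  using indep_samples prob_space_M by (auto simp: prob_space.indep_vars_def)

lemma nn_integral_gd_risk_sgd_step:
  "(\<integral>\<^sup>+w. gd_risk j (\<theta> - (\<gamma> * (inner \<theta> (fst w) - snd w)) *\<^sub>R fst w - \<theta>s) \<partial>\<rho>)
    \<le> gd_risk (Suc j) (\<theta> - \<theta>s) + \<gamma> * R / (2 * real j + 1) * hnorm_sq (\<theta> - \<theta>s)"
proof -
  let ?v = "\<theta> - \<theta>s"
  have "(\<integral>\<^sup>+w. gd_risk j (\<theta> - (\<gamma> * (inner \<theta> (fst w) - snd w)) *\<^sub>R fst w - \<theta>s) \<partial>\<rho>)
      = (\<integral>\<^sup>+w. gd_risk j (?v - (\<gamma> * inner ?v (fst w)) *\<^sub>R fst w) \<partial>\<rho>)"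
    using realizable by (intro nn_integral_cong_AE) (auto simp: algebra_simps)
  also have "\<dots> \<le> gd_risk (Suc j) ?v + \<gamma> * R / (2 * real j + 1) * hnorm_sq ?v"
    by (rule nn_integral_gd_risk_sample_step)
  finally show ?thesis .
qed

lemma expected_gd_risk_Suc_le:
  "expected_gd_risk (Suc t) j \<le> expected_gd_risk t (Suc j) + ennreal (\<gamma> * R / (2 * real j + 1)) * expected_gd_risk t 0"
proof -
  interpret M: prob_space M by (rule prob_space_M)
  let ?c = "\<gamma> * R / (2 * real j + 1)"
  let ?\<theta> = "\<lambda>\<omega>. sgd \<gamma> (\<lambda>i. z i \<omega>) t"
  define F where "F p = ennreal (gd_risk j (fst p - (\<gamma> * (inner (fst p) (fst (snd p)) - snd (snd p))) *\<^sub>R fst (snd p) - \<theta>s))"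
    for p :: "'a \<times> 'a \<times> real"
  have F: "F \<in> borel_measurable (borel \<Otimes>\<^sub>M borel)" unfolding F_def by measurable
  have sgd_past: "sgd \<gamma> (restrict (\<lambda>i. z i \<omega>) {..<t}) t = ?\<theta> \<omega>" for \<omega>
    by (rule sgd_cong) simp
  have "expected_gd_risk (Suc t) j = (\<integral>\<^sup>+\<omega>. F (?\<theta> \<omega>, z t \<omega>) \<partial>M)"
    unfolding expected_gd_risk_def F_def by simp
  also have "\<dots> = (\<integral>\<^sup>+\<omega>. (\<integral>\<^sup>+w. F (?\<theta> \<omega>, w) \<partial>\<rho>) \<partial>M)"
    using M.nn_integral_indep_initial_segment[OF indep_samples measurable_sgd_PiM[where \<gamma> = \<gamma> and t = t, OF order_refl] F]
    by (simp only: distr_samples sgd_past)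
  also have "\<dots> \<le> (\<integral>\<^sup>+\<omega>. ennreal (gd_risk (Suc j) (?\<theta> \<omega> - \<theta>s)) + ennreal ?c * ennreal (hnorm_sq (?\<theta> \<omega> - \<theta>s)) \<partial>M)"
  proof (rule nn_integral_mono)
    have "0 \<le> ?c" using R_nonneg step_pos by simp
    then show "(\<integral>\<^sup>+w. F (?\<theta> \<omega>, w) \<partial>\<rho>)
        \<le> ennreal (gd_risk (Suc j) (?\<theta> \<omega> - \<theta>s)) + ennreal ?c * ennreal (hnorm_sq (?\<theta> \<omega> - \<theta>s))" for \<omega>
      using nn_integral_gd_risk_sgd_step[of j "?\<theta> \<omega>"] unfolding F_def
      by (simp only: fst_conv snd_conv ennreal_plus[OF gd_risk_nonneg mult_nonneg_nonneg[OF _ hnorm_sq_nonneg]]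
          ennreal_mult[OF _ hnorm_sq_nonneg])
  qed
  also have "\<dots> = expected_gd_risk t (Suc j) + ennreal ?c * expected_gd_risk t 0"
    by (simp add: expected_gd_risk_def gd_risk_0 nn_integral_add nn_integral_cmult)
  finally show ?thesis .
qed

lemma expected_gd_risk_unrolled:
  "expected_gd_risk t j \<le> ennreal (gd_risk (t + j) (- \<theta>s))
    + (\<Sum>k<t. ennreal (\<gamma> * R / (2 * real (t - 1 - k + j) + 1)) * expected_gd_risk k 0)"
proof (induction t arbitrary: j)
  case 0
  interpret M: prob_space M by (rule prob_space_M)
  show ?case by (simp add: expected_gd_risk_def M.emeasure_space_1)
next
  case (Suc t)
  have "expected_gd_risk (Suc t) j
      \<le> expected_gd_risk t (Suc j) + ennreal (\<gamma> * R / (2 * real j + 1)) * expected_gd_risk t 0"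
    by (rule expected_gd_risk_Suc_le)
  also have "\<dots> \<le> ennreal (gd_risk (t + Suc j) (- \<theta>s))
      + (\<Sum>k<t. ennreal (\<gamma> * R / (2 * real (t - 1 - k + Suc j) + 1)) * expected_gd_risk k 0)
      + ennreal (\<gamma> * R / (2 * real j + 1)) * expected_gd_risk t 0"
    by (intro add_right_mono Suc.IH)
  also have "(\<Sum>k<t. ennreal (\<gamma> * R / (2 * real (t - 1 - k + Suc j) + 1)) * expected_gd_risk k 0)
      = (\<Sum>k<t. ennreal (\<gamma> * R / (2 * real (Suc t - 1 - k + j) + 1)) * expected_gd_risk k 0)"
    by (intro sum.cong refl) (simp add: Suc_diff_Suc)
  finally show ?case by (simp add: add.assoc)
qed

lemma expected_gd_risk_finite: "expected_gd_risk t 0 < \<infinity>"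
proof (induction t rule: less_induct)
  case (less t)
  have "expected_gd_risk t 0 \<le> ennreal (gd_risk t (- \<theta>s))
      + (\<Sum>k<t. ennreal (\<gamma> * R / (2 * real (t - 1 - k) + 1)) * expected_gd_risk k 0)"
    using expected_gd_risk_unrolled[of t 0] by simp
  also have "\<dots> < \<infinity>" using less by (simp add: ennreal_mult_less_top)
  finally show ?case .
qed

lemma expected_risk_eq:
  "prob_space.expectation M (\<lambda>\<omega>. risk \<rho> (sgd \<gamma> (\<lambda>i. z i \<omega>) t)) = enn2real (expected_gd_risk t 0) / 2"
proof -
  interpret M: prob_space M by (rule prob_space_M)
  have "M.expectation (\<lambda>\<omega>. risk \<rho> (sgd \<gamma> (\<lambda>i. z i \<omega>) t))
      = M.expectation (\<lambda>\<omega>. hnorm_sq (sgd \<gamma> (\<lambda>i. z i \<omega>) t - \<theta>s)) / 2"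
    by (simp add: risk_eq_hnorm_sq[OF realizable])
  also have "M.expectation (\<lambda>\<omega>. hnorm_sq (sgd \<gamma> (\<lambda>i. z i \<omega>) t - \<theta>s)) = enn2real (expected_gd_risk t 0)"
    unfolding expected_gd_risk_def gd_risk_0 by (rule integral_eq_nn_integral) (auto simp: hnorm_sq_nonneg)
  finally show ?thesis .
qed

lemma enn2real_expected_gd_risk_le:
  "enn2real (expected_gd_risk t 0) \<le> gd_risk t (- \<theta>s)
    + (\<Sum>k<t. \<gamma> * R / (2 * real (t - 1 - k) + 1) * enn2real (expected_gd_risk k 0))"
proof -
  define g where "g k = enn2real (expected_gd_risk k 0)" for k
  define c where "c k = \<gamma> * R / (2 * real (t - 1 - k) + 1)" for k
  have g_nonneg: "0 \<le> g k" for k by (simp add: g_def)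
  have c_nonneg: "0 \<le> c k" for k using step_pos R_nonneg by (simp add: c_def)
  have "ennreal (g t) \<le> ennreal (gd_risk t (- \<theta>s)) + (\<Sum>k<t. ennreal (c k) * ennreal (g k))"
    using expected_gd_risk_unrolled[of t 0] expected_gd_risk_finite by (simp add: g_def c_def)
  also have "(\<Sum>k<t. ennreal (c k) * ennreal (g k)) = ennreal (\<Sum>k<t. c k * g k)"
    using c_nonneg g_nonneg by (simp add: ennreal_mult[symmetric])
  also have "ennreal (gd_risk t (- \<theta>s)) + \<dots> = ennreal (gd_risk t (- \<theta>s) + (\<Sum>k<t. c k * g k))"
    using c_nonneg g_nonneg gd_risk_nonneg by (simp add: sum_nonneg flip: ennreal_plus)
  finally show ?thesis
    using c_nonneg g_nonneg gd_risk_nonneg unfolding g_def[symmetric] c_def[symmetric]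
    by (subst (asm) ennreal_le_iff) (auto intro!: add_nonneg_nonneg sum_nonneg)
qed

lemma expected_risk_bound:
  fixes t :: nat
  defines "f \<equiv> \<lambda>k. prob_space.expectation M (\<lambda>\<omega>. risk \<rho> (sgd \<gamma> (\<lambda>i. z i \<omega>) k))"
  assumes "1 \<le> t"
  shows "f t \<le> (norm \<theta>s)\<^sup>2 / (4 * \<gamma> * real t) + \<gamma> * R * (\<Sum>k<t. f k / (real t - real k))"
proof -
  define c where "c k = \<gamma> * R / (2 * real (t - 1 - k) + 1)" for k
  have f_eq: "f k = enn2real (expected_gd_risk k 0) / 2" for k by (simp add: f_def expected_risk_eq)
  have "f t \<le> (gd_risk t (- \<theta>s) + (\<Sum>k<t. c k * enn2real (expected_gd_risk k 0))) / 2"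
    unfolding f_eq c_def using enn2real_expected_gd_risk_le[of t] by (rule divide_right_mono) simp
  also have "\<dots> = gd_risk t (- \<theta>s) / 2 + (\<Sum>k<t. c k * f k)"
    by (simp add: f_eq add_divide_distrib sum_divide_distrib)
  also have "gd_risk t (- \<theta>s) / 2 \<le> (norm \<theta>s)\<^sup>2 / (4 * \<gamma> * real t)"
  proof -
    have "gd_risk t (- \<theta>s) \<le> (norm \<theta>s)\<^sup>2 / (\<gamma> * (2 * real t + 1))"
      using gd_risk_le[of t "- \<theta>s"] by simp
    also have "\<dots> \<le> (norm \<theta>s)\<^sup>2 / (\<gamma> * (2 * real t))"
      using step_pos \<open>1 \<le> t\<close> by (intro divide_left_mono) auto
    finally show ?thesis using step_pos by (simp add: field_simps)
  qed
  also have "(\<Sum>k<t. c k * f k) \<le> (\<Sum>k<t. \<gamma> * R * (f k / (real t - real k)))"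
  proof (intro sum_mono)
    fix k assume "k \<in> {..<t}"
    then have "real t - real k \<le> 2 * real (t - 1 - k) + 1" and "0 < real t - real k"
      by auto
    then have "c k \<le> \<gamma> * R / (real t - real k)"
      unfolding c_def using step_pos R_nonneg by (intro divide_left_mono) auto
    then have "c k * f k \<le> \<gamma> * R / (real t - real k) * f k"
      by (rule mult_right_mono) (simp add: f_eq)
    then show "c k * f k \<le> \<gamma> * R * (f k / (real t - real k))" by simp
  qed
  finally show ?thesis by (simp add: sum_distrib_left)
qed

end

theorem lemma2:
  fixes \<rho> :: "('a::{real_inner,second_countable_topology,complete_space} \<times> real) measure"
    and M :: "'m measure"
    and z :: "nat \<Rightarrow> 'm \<Rightarrow> 'a \<times> real"
    and \<theta>s :: 'a and R \<gamma> lmax :: real and t :: nat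
  assumes rho_prob: "prob_space \<rho>"
    and rho_sets: "sets \<rho> = sets borel"
    and second_moment: "integrable \<rho> (\<lambda>w. (norm (fst w))\<^sup>2)"
    and fourth_moment: "integrable \<rho> (\<lambda>w. (norm (fst w)) ^ 4)"
    and lmax: "largest_eigenvalue (cov_op \<rho>) lmax"
    and realizable: "AE w in \<rho>. inner \<theta>s (fst w) = snd w"
    and R_nonneg: "R \<ge> 0"
    and fourth: "loewner_le (fourth_op \<rho>) (\<lambda>v. R *\<^sub>R cov_op \<rho> v)"
    and M_prob: "prob_space M"
    and iid_indep: "prob_space.indep_vars M (\<lambda>_. borel) z UNIV"
    and iid_distr: "\<And>i. distr M borel (z i) = \<rho>"
    and gamma_pos: "\<gamma> > 0"
    and gamma_le: "\<gamma> * (4 * lmax) \<le> 1"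
    and t_ge: "t \<ge> 1"
  shows "(let f = (\<lambda>k. prob_space.expectation M (\<lambda>\<omega>. risk \<rho> (sgd \<gamma> (\<lambda>i. z i \<omega>) k))) in
           f t \<le> (norm \<theta>s)\<^sup>2 / (4 * \<gamma> * real t)
                   + \<gamma> * R * (\<Sum>k<t. f k / (real t - real k)))"
proof -
  interpret finite_second_moment \<rho>
    using rho_prob rho_sets second_moment by (rule finite_second_moment.intro)
  have "\<gamma> * lmax \<le> 1" using gamma_le by linarith
  then have "\<gamma> * hnorm_sq v \<le> (norm v)\<^sup>2" for v
    using mult_left_mono[OF hnorm_sq_le_largest_eigenvalue[OF lmax, of v] less_imp_le[OF gamma_pos]]
      mult_right_mono[of "\<gamma> * lmax" 1 "(norm v)\<^sup>2"] by (simp add: mult.assoc)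
  moreover have "inner v (fourth_op \<rho> v) \<le> R * hnorm_sq v" for v
    using fourth by (simp add: loewner_le_def hnorm_sq_def)
  ultimately interpret realizable_sgd \<rho> \<gamma> R M z \<theta>s
    using gamma_pos fourth_moment M_prob iid_indep iid_distr realizable R_nonneg
    by (intro realizable_sgd.intro gd_fourth_moment.intro gd_contraction.intro realizable_sgd_axioms.intro
        gd_fourth_moment_axioms.intro gd_contraction_axioms.intro finite_second_moment_axioms)
  show ?thesis unfolding Let_def using expected_risk_bound[OF t_ge] by simp
qed

end
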